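(* Let $G$ be a graph formed from the paw $K_{1,3}+e$ (a triangle together with one pendent edge attached to a vertex of the triangle) by subdividing the pendent edge $0$ or more times. If $L$ is a list-assignment with $|L(v)|\ge\deg(v)+1$ for all $v\in V(G)$ and $\alpha,\beta$ are unfrozen $L$-colourings, then $\alpha\sim\beta$.
   Context: An $L$-colouring is a proper colouring $\varphi$ with $\varphi(v)\in L(v)$ for all $v$. A vertex $v$ is frozen under $\varphi$ if every colour of $L(v)\setminus\{\varphi(v)\}$ appears on a neighbour of $v$; a colouring is unfrozen if at least one vertex is not frozen. $\alpha\sim\beta$ means $\alpha$ can be transformed into $\beta$ by a sequence of single-vertex recolouring steps, each keeping the colouring a proper $L$-colouring. *)

theory Defs
  imports Main
begin

text \<open>Generic graph notions: a graph is a vertex set V with a symmetric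
irreflexive adjacency relation E. Colourings are functions on vertices;
values outside V are irrelevant.\<close>

definition degree :: "'a set \<Rightarrow> ('a \<Rightarrow> 'a \<Rightarrow> bool) \<Rightarrow> 'a \<Rightarrow> nat" where
  "degree V E v = card {u \<in> V. E v u}"

definition is_L_colouring ::
  "'a set \<Rightarrow> ('a \<Rightarrow> 'a \<Rightarrow> bool) \<Rightarrow> ('a \<Rightarrow> 'c set) \<Rightarrow> ('a \<Rightarrow> 'c) \<Rightarrow> bool" where
  "is_L_colouring V E L \<phi> \<longleftrightarrow>
     (\<forall>v\<in>V. \<phi> v \<in> L v) \<and> (\<forall>u\<in>V. \<forall>v\<in>V. E u v \<longrightarrow> \<phi> u \<noteq> \<phi> v)"

definition frozen ::
  "'a set \<Rightarrow> ('a \<Rightarrow> 'a \<Rightarrow> bool) \<Rightarrow> ('a \<Rightarrow> 'c set) \<Rightarrow> ('a \<Rightarrow> 'c) \<Rightarrow> 'a \<Rightarrow> bool" where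
  "frozen V E L \<phi> v \<longleftrightarrow> (\<forall>c \<in> L v - {\<phi> v}. \<exists>u\<in>V. E v u \<and> \<phi> u = c)"

definition unfrozen ::
  "'a set \<Rightarrow> ('a \<Rightarrow> 'a \<Rightarrow> bool) \<Rightarrow> ('a \<Rightarrow> 'c set) \<Rightarrow> ('a \<Rightarrow> 'c) \<Rightarrow> bool" where
  "unfrozen V E L \<phi> \<longleftrightarrow> (\<exists>v\<in>V. \<not> frozen V E L \<phi> v)"

definition recolour_step ::
  "'a set \<Rightarrow> ('a \<Rightarrow> 'a \<Rightarrow> bool) \<Rightarrow> ('a \<Rightarrow> 'c set) \<Rightarrow> ('a \<Rightarrow> 'c) \<Rightarrow> ('a \<Rightarrow> 'c) \<Rightarrow> bool" where
  "recolour_step V E L \<phi> \<psi> \<longleftrightarrow>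
     is_L_colouring V E L \<phi> \<and> is_L_colouring V E L \<psi> \<and>
     (\<exists>v\<in>V. \<forall>u\<in>V. u \<noteq> v \<longrightarrow> \<psi> u = \<phi> u)"

definition reconf_equiv ::
  "'a set \<Rightarrow> ('a \<Rightarrow> 'a \<Rightarrow> bool) \<Rightarrow> ('a \<Rightarrow> 'c set) \<Rightarrow> ('a \<Rightarrow> 'c) \<Rightarrow> ('a \<Rightarrow> 'c) \<Rightarrow> bool" where
  "reconf_equiv V E L \<alpha> \<beta> \<longleftrightarrow> (recolour_step V E L)\<^sup>*\<^sup>* \<alpha> \<beta>"

text \<open>The paw with its pendent edge subdivided (n - 3) times, n \<ge> 3:
vertices 0..n, triangle 0,1,2, and path 2 - 3 - ... - n.\<close>
definition paw_vertices :: "nat \<Rightarrow> nat set" where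
  "paw_vertices n = {0..n}"

definition paw_adj :: "nat \<Rightarrow> nat \<Rightarrow> nat \<Rightarrow> bool" where
  "paw_adj n u v \<longleftrightarrow> u \<le> n \<and> v \<le> n \<and>
     ({u, v} = {0, 1} \<or> {u, v} = {0, 2} \<or> {u, v} = {1, 2} \<or>
      (\<exists>i. 2 \<le> i \<and> i < n \<and> {u, v} = {i, Suc i}))"

end

theory Submission
  imports Defs
begin

(* Induction on the number of vertices, deleting the last vertex z: the graphs on {0..n} are a
   vertex, an edge, the triangle and then the paws with longer and longer pendent paths.
   Colouring z with r leaves G - z with residual lists, where r is removed at the neighbours of z;
   these are again degree-plus-one lists, so by induction the colourings of G - z that are unfrozen
   for them are connected, and the connecting sequences lift to G with z fixed at r.
   An unfrozen colouring of G is at most one step away from one whose restriction to G - z is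
   unfrozen for its residual lists: if that restriction is frozen then z is not, and recolouring z
   to a free colour unfreezes the neighbour of z (it cannot be frozen for two residual lists).
   Passing from colour r to r' at z needs a colouring of G - z unfrozen for both residual lists;
   this is the only place where the shape of the graph enters. On the cliques K1, K2, K3 a proper
   colouring is unfrozen exactly when the lists offer more colours than there are vertices, so
   there any colouring proper for both residual lists will do. *)

definition residual_lists ::
  "('a \<Rightarrow> 'a \<Rightarrow> bool) \<Rightarrow> 'a \<Rightarrow> ('a \<Rightarrow> 'c set) \<Rightarrow> 'c \<Rightarrow> 'a \<Rightarrow> 'c set" where
  "residual_lists E z L r x = (if E x z then L x - {r} else L x)"

definition deg_plus_one_lists :: "'a set \<Rightarrow> ('a \<Rightarrow> 'a \<Rightarrow> bool) \<Rightarrow> ('a \<Rightarrow> 'c set) \<Rightarrow> bool" where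
  "deg_plus_one_lists V E L \<longleftrightarrow> (\<forall>v\<in>V. finite (L v) \<and> degree V E v + 1 \<le> card (L v))"

definition unfrozen_colouring ::
  "'a set \<Rightarrow> ('a \<Rightarrow> 'a \<Rightarrow> bool) \<Rightarrow> ('a \<Rightarrow> 'c set) \<Rightarrow> ('a \<Rightarrow> 'c) \<Rightarrow> bool" where
  "unfrozen_colouring V E L \<phi> \<longleftrightarrow> is_L_colouring V E L \<phi> \<and> unfrozen V E L \<phi>"

definition unfrozen_connected :: "'a set \<Rightarrow> ('a \<Rightarrow> 'a \<Rightarrow> bool) \<Rightarrow> ('a \<Rightarrow> 'c set) \<Rightarrow> bool" where
  "unfrozen_connected V E L \<longleftrightarrow>
     (\<forall>\<alpha> \<beta>. unfrozen_colouring V E L \<alpha> \<longrightarrow> unfrozen_colouring V E L \<beta> \<longrightarrow> reconf_equiv V E L \<alpha> \<beta>)"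

lemma reconf_equiv_refl [simp]: "reconf_equiv V E L \<alpha> \<alpha>"
  by (simp add: reconf_equiv_def)

lemma reconf_equiv_trans [trans]:
  "reconf_equiv V E L \<alpha> \<beta> \<Longrightarrow> reconf_equiv V E L \<beta> \<gamma> \<Longrightarrow> reconf_equiv V E L \<alpha> \<gamma>"
  unfolding reconf_equiv_def by (rule rtranclp_trans)

lemma recolour_step_imp_reconf_equiv: "recolour_step V E L \<alpha> \<beta> \<Longrightarrow> reconf_equiv V E L \<alpha> \<beta>"
  unfolding reconf_equiv_def by (rule r_into_rtranclp)

lemma reconf_equiv_sym: "reconf_equiv V E L \<alpha> \<beta> \<Longrightarrow> reconf_equiv V E L \<beta> \<alpha>"
proof -
  have "symp (recolour_step V E L)"
    unfolding recolour_step_def by (rule sympI) metis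
  then show "reconf_equiv V E L \<alpha> \<beta> \<Longrightarrow> reconf_equiv V E L \<beta> \<alpha>"
    unfolding reconf_equiv_def by (blast dest: symp_rtranclp sympD)
qed

lemma unfrozenI:
  "v \<in> V \<Longrightarrow> c \<in> L v \<Longrightarrow> c \<noteq> \<phi> v \<Longrightarrow> (\<forall>u\<in>V. E v u \<longrightarrow> \<phi> u \<noteq> c) \<Longrightarrow> unfrozen V E L \<phi>"
  unfolding unfrozen_def frozen_def by blast

lemma unfrozen_colouring_cong:
  "\<forall>v\<in>V. \<phi> v = \<phi>' v \<Longrightarrow> unfrozen_colouring V E L \<phi> \<longleftrightarrow> unfrozen_colouring V E L \<phi>'"
  unfolding unfrozen_colouring_def is_L_colouring_def unfrozen_def frozen_def by simp

lemma card_le_degree: "finite V \<Longrightarrow> S \<subseteq> {u \<in> V. E v u} \<Longrightarrow> card S \<le> degree V E v"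
  unfolding degree_def by (rule card_mono) auto

lemma degree_Diff_singleton:
  assumes "finite V" "z \<in> V"
  shows "degree V E x = degree (V - {z}) E x + (if E x z then 1 else 0)"
proof -
  have "{u \<in> V. E x u} = (if E x z then insert z {u \<in> V - {z}. E x u} else {u \<in> V - {z}. E x u})"
    using assms(2) by auto
  then show ?thesis
    unfolding degree_def using assms(1) by simp
qed

lemma ex_not_in_card_less: "finite B \<Longrightarrow> card B < card A \<Longrightarrow> \<exists>x\<in>A. x \<notin> B"
  by (meson card_mono not_le subsetI)

context
  fixes V :: "'a set" and E :: "'a \<Rightarrow> 'a \<Rightarrow> bool" and z :: 'a
  assumes finite_V: "finite V" and z_in_V: "z \<in> V"
    and sym: "\<forall>x\<in>V. \<forall>y\<in>V. E x y = E y x" and no_loop_z: "\<not> E z z"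
begin

lemma is_L_colouring_extend:
  "is_L_colouring (V - {z}) E (residual_lists E z L r) \<chi> \<Longrightarrow> r \<in> L z \<Longrightarrow>
    is_L_colouring V E L (\<chi>(z := r))"
  using sym no_loop_z unfolding is_L_colouring_def residual_lists_def
  by (auto split: if_splits)

lemma reconf_equiv_extend:
  assumes "reconf_equiv (V - {z}) E (residual_lists E z L r) \<chi> \<chi>'" and "r \<in> L z"
  shows "reconf_equiv V E L (\<chi>(z := r)) (\<chi>'(z := r))"
  using assms(1) unfolding reconf_equiv_def
proof (induction rule: rtranclp_induct)
  case (step \<chi>1 \<chi>2)
  then have "recolour_step V E L (\<chi>1(z := r)) (\<chi>2(z := r))"
    unfolding recolour_step_def using is_L_colouring_extend assms(2) by auto
  with step.IH show ?case by (meson rtranclp.rtrancl_into_rtrancl)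
qed simp

lemma is_L_colouring_residual:
  "is_L_colouring V E L \<gamma> \<Longrightarrow> is_L_colouring (V - {z}) E (residual_lists E z L (\<gamma> z)) \<gamma>"
  using z_in_V unfolding is_L_colouring_def residual_lists_def by auto

lemma frozen_iff_frozen_residual:
  assumes "x \<in> V" "x \<noteq> z"
  shows "frozen V E L \<gamma> x \<longleftrightarrow> frozen (V - {z}) E (residual_lists E z L (\<gamma> z)) \<gamma> x"
  using assms z_in_V unfolding frozen_def residual_lists_def
  by (cases "E x z") auto

lemma deg_plus_one_lists_residual:
  assumes "deg_plus_one_lists V E L"
  shows "deg_plus_one_lists (V - {z}) E (residual_lists E z L r)"
  unfolding deg_plus_one_lists_def
proof
  fix v assume "v \<in> V - {z}"
  then have "finite (L v)" "degree (V - {z}) E v + (if E v z then 1 else 0) + 1 \<le> card (L v)"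
    using assms degree_Diff_singleton[OF finite_V z_in_V, of E v]
    unfolding deg_plus_one_lists_def by auto
  moreover have "card (L v) \<le> card (L v - {r}) + 1"
    using \<open>finite (L v)\<close> by (cases "r \<in> L v") (simp_all add: card_Suc_Diff1)
  ultimately show
    "finite (residual_lists E z L r v) \<and> degree (V - {z}) E v + 1 \<le> card (residual_lists E z L r v)"
    unfolding residual_lists_def by auto
qed

lemma not_frozen_in_two_residuals:
  assumes lists: "deg_plus_one_lists V E L" and x: "x \<in> V" "E x z" "\<gamma> x \<in> L x"
    and "r \<noteq> r'" and frozen_r: "frozen (V - {z}) E (residual_lists E z L r) \<gamma> x"
  shows "\<not> frozen (V - {z}) E (residual_lists E z L r') \<gamma> x"
proof
  assume frozen_r': "frozen (V - {z}) E (residual_lists E z L r') \<gamma> x"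
  have "L x - {\<gamma> x} \<subseteq> \<gamma> ` {u \<in> V - {z}. E x u}"
  proof
    fix c assume c: "c \<in> L x - {\<gamma> x}"
    with \<open>r \<noteq> r'\<close> \<open>E x z\<close> have
      "c \<in> residual_lists E z L r x - {\<gamma> x} \<or> c \<in> residual_lists E z L r' x - {\<gamma> x}"
      unfolding residual_lists_def by auto
    with frozen_r frozen_r' obtain u where "u \<in> V - {z}" "E x u" "\<gamma> u = c"
      unfolding frozen_def by blast
    then show "c \<in> \<gamma> ` {u \<in> V - {z}. E x u}" by blast
  qed
  then have "card (L x - {\<gamma> x}) \<le> card (\<gamma> ` {u \<in> V - {z}. E x u})"
    by (rule card_mono[rotated]) (use finite_V in simp)
  also have "\<dots> \<le> degree (V - {z}) E x"
    unfolding degree_def by (rule card_image_le) (use finite_V in simp)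
  also have "\<dots> + 1 = degree V E x"
    using degree_Diff_singleton[OF finite_V z_in_V, of E x] \<open>E x z\<close> by simp
  finally have "card (L x - {\<gamma> x}) + 1 \<le> degree V E x" by simp
  moreover have "finite (L x)" "degree V E x + 1 \<le> card (L x)"
    using lists x(1) unfolding deg_plus_one_lists_def by auto
  ultimately show False
    using \<open>\<gamma> x \<in> L x\<close> by (simp add: card_Suc_Diff1)
qed

lemma recolour_to_residually_unfrozen:
  assumes lists: "deg_plus_one_lists V E L" and "\<exists>x\<in>V. E z x"
    and \<gamma>: "unfrozen_colouring V E L \<gamma>"
    and frozen: "\<not> unfrozen (V - {z}) E (residual_lists E z L (\<gamma> z)) \<gamma>"
  obtains r' where "r' \<in> L z" "recolour_step V E L \<gamma> (\<gamma>(z := r'))"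
    "unfrozen_colouring (V - {z}) E (residual_lists E z L r') (\<gamma>(z := r'))"
proof -
  from frozen have all_frozen: "\<forall>x\<in>V - {z}. frozen (V - {z}) E (residual_lists E z L (\<gamma> z)) \<gamma> x"
    unfolding unfrozen_def by blast
  then have "\<forall>x\<in>V - {z}. frozen V E L \<gamma> x"
    using frozen_iff_frozen_residual by blast
  with \<gamma> have "\<not> frozen V E L \<gamma> z"
    unfolding unfrozen_colouring_def unfrozen_def by blast
  then obtain r' where r': "r' \<in> L z" "r' \<noteq> \<gamma> z" "\<forall>u\<in>V. E z u \<longrightarrow> \<gamma> u \<noteq> r'"
    unfolding frozen_def by blast
  have col_r': "is_L_colouring (V - {z}) E (residual_lists E z L r') \<gamma>"
    using \<gamma> r'(3) sym z_in_V unfolding unfrozen_colouring_def is_L_colouring_def residual_lists_def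
    by auto
  obtain x where x: "x \<in> V" "E z x"
    using \<open>\<exists>x\<in>V. E z x\<close> by blast
  then have "x \<in> V - {z}" "E x z"
    using no_loop_z sym z_in_V by auto
  moreover have "\<gamma> x \<in> L x"
    using \<gamma> x(1) unfolding unfrozen_colouring_def is_L_colouring_def by blast
  ultimately have "\<not> frozen (V - {z}) E (residual_lists E z L r') \<gamma> x"
    using not_frozen_in_two_residuals[OF lists x(1)] all_frozen r'(2) by blast
  with col_r' \<open>x \<in> V - {z}\<close> have "unfrozen_colouring (V - {z}) E (residual_lists E z L r') \<gamma>"
    unfolding unfrozen_colouring_def unfrozen_def by blast
  then have "unfrozen_colouring (V - {z}) E (residual_lists E z L r') (\<gamma>(z := r'))"
    using unfrozen_colouring_cong[of "V - {z}" "\<gamma>(z := r')" \<gamma>] by simp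
  moreover have "recolour_step V E L \<gamma> (\<gamma>(z := r'))"
    using \<gamma> is_L_colouring_extend[OF col_r' r'(1)] z_in_V
    unfolding recolour_step_def unfrozen_colouring_def by auto
  ultimately show ?thesis
    using that r'(1) by blast
qed

lemma reconf_equiv_residually_unfrozen:
  assumes lists: "deg_plus_one_lists V E L" and "\<exists>x\<in>V. E z x"
    and \<gamma>: "unfrozen_colouring V E L \<gamma>"
  obtains \<gamma>' where "reconf_equiv V E L \<gamma> \<gamma>'" "\<gamma>' z \<in> L z"
    "unfrozen_colouring (V - {z}) E (residual_lists E z L (\<gamma>' z)) \<gamma>'"
proof (cases "unfrozen (V - {z}) E (residual_lists E z L (\<gamma> z)) \<gamma>")
  case True
  moreover have "\<gamma> z \<in> L z"
    using \<gamma> z_in_V unfolding unfrozen_colouring_def is_L_colouring_def by blast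
  moreover have "is_L_colouring (V - {z}) E (residual_lists E z L (\<gamma> z)) \<gamma>"
    using \<gamma> is_L_colouring_residual unfolding unfrozen_colouring_def by blast
  ultimately show ?thesis
    using that[of \<gamma>] unfolding unfrozen_colouring_def by simp
next
  case False
  with recolour_to_residually_unfrozen[OF lists \<open>\<exists>x\<in>V. E z x\<close> \<gamma>] obtain r' where
    "r' \<in> L z" "recolour_step V E L \<gamma> (\<gamma>(z := r'))"
    "unfrozen_colouring (V - {z}) E (residual_lists E z L r') (\<gamma>(z := r'))"
    by blast
  then show ?thesis
    using that[of "\<gamma>(z := r')"] by (simp add: recolour_step_imp_reconf_equiv)
qed

lemma reconf_equiv_same_colour:
  fixes L :: "'a \<Rightarrow> 'c set"
  assumes lists: "deg_plus_one_lists V E L"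
    and IH: "\<forall>L' :: 'a \<Rightarrow> 'c set.
        deg_plus_one_lists (V - {z}) E L' \<longrightarrow> unfrozen_connected (V - {z}) E L'"
    and "r \<in> L z" "unfrozen_colouring (V - {z}) E (residual_lists E z L r) \<psi>1"
      "unfrozen_colouring (V - {z}) E (residual_lists E z L r) \<psi>2"
  shows "reconf_equiv V E L (\<psi>1(z := r)) (\<psi>2(z := r))"
proof -
  have "unfrozen_connected (V - {z}) E (residual_lists E z L r)"
    using IH deg_plus_one_lists_residual[OF lists] by simp
  with assms(4,5) have "reconf_equiv (V - {z}) E (residual_lists E z L r) \<psi>1 \<psi>2"
    unfolding unfrozen_connected_def by simp
  then show ?thesis
    using \<open>r \<in> L z\<close> by (rule reconf_equiv_extend)
qed

lemma recolour_step_switch: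
  assumes "is_L_colouring (V - {z}) E (residual_lists E z L r) \<psi>" "r \<in> L z"
    and "is_L_colouring (V - {z}) E (residual_lists E z L r') \<psi>" "r' \<in> L z"
  shows "recolour_step V E L (\<psi>(z := r)) (\<psi>(z := r'))"
  unfolding recolour_step_def
proof (intro conjI bexI[of _ z])
  show "is_L_colouring V E L (\<psi>(z := r))" "is_L_colouring V E L (\<psi>(z := r'))"
    using assms by (simp_all add: is_L_colouring_extend)
qed (use z_in_V in simp_all)

theorem unfrozen_connected_delete_vertex:
  fixes L :: "'a \<Rightarrow> 'c set"
  assumes lists: "deg_plus_one_lists V E L" and "\<exists>x\<in>V. E z x"
    and IH: "\<forall>L' :: 'a \<Rightarrow> 'c set.
        deg_plus_one_lists (V - {z}) E L' \<longrightarrow> unfrozen_connected (V - {z}) E L'"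
    and common: "\<And>r r'. \<lbrakk>r \<in> L z; r' \<in> L z; r \<noteq> r';
        Ex (unfrozen_colouring (V - {z}) E (residual_lists E z L r));
        Ex (unfrozen_colouring (V - {z}) E (residual_lists E z L r'))\<rbrakk> \<Longrightarrow>
      \<exists>\<psi>. unfrozen_colouring (V - {z}) E (residual_lists E z L r) \<psi> \<and>
        unfrozen_colouring (V - {z}) E (residual_lists E z L r') \<psi>"
  shows "unfrozen_connected V E L"
  unfolding unfrozen_connected_def
proof (intro allI impI)
  note same_colour = reconf_equiv_same_colour[OF lists IH]
  fix \<alpha> \<beta> assume \<alpha>: "unfrozen_colouring V E L \<alpha>" and \<beta>: "unfrozen_colouring V E L \<beta>"
  obtain \<alpha>' where \<alpha>': "reconf_equiv V E L \<alpha> \<alpha>'" "\<alpha>' z \<in> L z"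
    "unfrozen_colouring (V - {z}) E (residual_lists E z L (\<alpha>' z)) \<alpha>'"
    using reconf_equiv_residually_unfrozen[OF lists \<open>\<exists>x\<in>V. E z x\<close> \<alpha>] by blast
  obtain \<beta>' where \<beta>': "reconf_equiv V E L \<beta> \<beta>'" "\<beta>' z \<in> L z"
    "unfrozen_colouring (V - {z}) E (residual_lists E z L (\<beta>' z)) \<beta>'"
    using reconf_equiv_residually_unfrozen[OF lists \<open>\<exists>x\<in>V. E z x\<close> \<beta>] by blast
  have "reconf_equiv V E L \<alpha>' \<beta>'"
  proof (cases "\<alpha>' z = \<beta>' z")
    case True
    have "reconf_equiv V E L (\<alpha>'(z := \<alpha>' z)) (\<beta>'(z := \<alpha>' z))"
      using \<alpha>'(2,3) \<beta>'(3) True by (intro same_colour) simp_all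
    with True show ?thesis by (simp add: fun_upd_idem)
  next
    case False
    have "Ex (unfrozen_colouring (V - {z}) E (residual_lists E z L (\<alpha>' z)))"
      "Ex (unfrozen_colouring (V - {z}) E (residual_lists E z L (\<beta>' z)))"
      using \<alpha>'(3) \<beta>'(3) by auto
    then obtain \<psi> where \<psi>: "unfrozen_colouring (V - {z}) E (residual_lists E z L (\<alpha>' z)) \<psi>"
      "unfrozen_colouring (V - {z}) E (residual_lists E z L (\<beta>' z)) \<psi>"
      using common[OF \<alpha>'(2) \<beta>'(2) False] by blast
    have "reconf_equiv V E L \<alpha>' (\<psi>(z := \<alpha>' z))"
      using same_colour[OF \<alpha>'(2,3) \<psi>(1)] by simp
    also have "reconf_equiv V E L \<dots> (\<psi>(z := \<beta>' z))"
      using \<psi> \<alpha>'(2) \<beta>'(2) unfolding unfrozen_colouring_def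
      by (intro recolour_step_imp_reconf_equiv recolour_step_switch) simp_all
    also have "reconf_equiv V E L \<dots> \<beta>'"
      using same_colour[OF \<beta>'(2) \<psi>(2) \<beta>'(3)] by simp
    finally show ?thesis .
  qed
  with \<alpha>'(1) have "reconf_equiv V E L \<alpha> \<beta>'"
    by (rule reconf_equiv_trans)
  also have "reconf_equiv V E L \<beta>' \<beta>"
    using \<beta>'(1) by (rule reconf_equiv_sym)
  finally show "reconf_equiv V E L \<alpha> \<beta>" .
qed

end

lemma ex_avoiding_two:
  assumes "finite A" "3 \<le> card A"
  shows "\<exists>x\<in>A. x \<noteq> a \<and> x \<noteq> b"
proof -
  have "card {a, b} < card A"
    using assms(2) card_insert_le_m1[of 2 "{b}" a] by simp
  then show ?thesis
    using ex_not_in_card_less[of "{a, b}" A] by simp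
qed

lemma unfrozen_clique_iff_card:
  assumes "finite W" "\<forall>v\<in>W. finite (L v)" and clique: "\<forall>u\<in>W. \<forall>v\<in>W. E u v \<longleftrightarrow> u \<noteq> v"
    and \<psi>: "is_L_colouring W E L \<psi>"
  shows "unfrozen W E L \<psi> \<longleftrightarrow> card W < card (\<Union>v\<in>W. L v)"
proof -
  have "frozen W E L \<psi> v \<longleftrightarrow> L v \<subseteq> \<psi> ` W" if "v \<in> W" for v
    using that clique unfolding frozen_def by (auto; metis DiffI empty_iff image_eqI insert_iff)
  then have "unfrozen W E L \<psi> \<longleftrightarrow> \<not> (\<Union>v\<in>W. L v) \<subseteq> \<psi> ` W"
    unfolding unfrozen_def by blast
  also have "\<dots> \<longleftrightarrow> card (\<psi> ` W) < card (\<Union>v\<in>W. L v)"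
  proof -
    have "\<psi> ` W \<subseteq> (\<Union>v\<in>W. L v)"
      using \<psi> unfolding is_L_colouring_def by blast
    moreover have "finite (\<Union>v\<in>W. L v)"
      using assms(1,2) by blast
    ultimately show ?thesis
      by (metis less_irrefl psubsetI psubset_card_mono subset_antisym)
  qed
  also have "card (\<psi> ` W) = card W"
    using clique \<psi> unfolding is_L_colouring_def by (intro card_image inj_onI) blast
  finally show ?thesis .
qed

lemma unfrozen_colouring_clique:
  assumes "finite W" "\<forall>v\<in>W. finite (L v)" "\<forall>u\<in>W. \<forall>v\<in>W. E u v \<longleftrightarrow> u \<noteq> v"
    and "Ex (unfrozen_colouring W E L)" "is_L_colouring W E L \<psi>"
  shows "unfrozen_colouring W E L \<psi>"
  using assms unfrozen_clique_iff_card[OF assms(1-3)] unfolding unfrozen_colouring_def by blast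

(* The triangle 0 1 2 with the infinite path 2 - 3 - 4 - ... attached. On {0..n} it induces K1, K2,
   K3 and, for n \<ge> 3, the graph paw_adj n. *)
definition lollipop_adj :: "nat \<Rightarrow> nat \<Rightarrow> bool" where
  "lollipop_adj x y \<longleftrightarrow>
     (x \<noteq> y \<and> x \<le> 2 \<and> y \<le> 2) \<or> (2 \<le> x \<and> y = Suc x) \<or> (2 \<le> y \<and> x = Suc y)"

lemma lollipop_adj_sym: "lollipop_adj x y \<longleftrightarrow> lollipop_adj y x"
  unfolding lollipop_adj_def by auto

lemma lollipop_adj_irrefl [simp]: "\<not> lollipop_adj x x"
  unfolding lollipop_adj_def by auto

lemma lollipop_adj_triangle: "u \<le> 2 \<Longrightarrow> v \<le> 2 \<Longrightarrow> lollipop_adj u v \<longleftrightarrow> u \<noteq> v"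
  unfolding lollipop_adj_def by auto

lemma lollipop_adj_path: "3 \<le> x \<Longrightarrow> lollipop_adj x y \<longleftrightarrow> y = x - 1 \<or> y = Suc x"
  unfolding lollipop_adj_def by auto

lemma lollipop_adj_last: "2 \<le> k \<Longrightarrow> v \<le> Suc k \<Longrightarrow> lollipop_adj (Suc k) v \<longleftrightarrow> v = k"
  unfolding lollipop_adj_def by auto

lemma lollipop_adj_Suc: "lollipop_adj (Suc n) n"
  unfolding lollipop_adj_def by auto

lemma paw_adj_iff: "paw_adj n x y \<longleftrightarrow> x \<le> n \<and> y \<le> n \<and> lollipop_adj x y"
  unfolding paw_adj_def lollipop_adj_def doubleton_eq_iff by auto

lemma residual_lists_lollipop:
  "x \<le> n \<Longrightarrow> residual_lists lollipop_adj (Suc n) L r x = (if x = n \<or> n \<le> 1 then L x - {r} else L x)"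
  unfolding residual_lists_def lollipop_adj_def by auto

lemma is_L_colouring_lollipop_Suc:
  assumes \<psi>: "is_L_colouring {0..k} lollipop_adj L \<psi>" and "2 \<le> k"
    and c: "c \<in> L (Suc k)" "c \<noteq> \<psi> k"
  shows "is_L_colouring {0..Suc k} lollipop_adj L (\<psi>(Suc k := c))"
  unfolding is_L_colouring_def
proof (intro conjI ballI impI)
  fix v assume "v \<in> {0..Suc k}"
  then show "(\<psi>(Suc k := c)) v \<in> L v"
    using \<psi> c unfolding is_L_colouring_def by (auto simp: le_Suc_eq)
next
  fix u v assume uv: "u \<in> {0..Suc k}" "v \<in> {0..Suc k}" "lollipop_adj u v"
  then show "(\<psi>(Suc k := c)) u \<noteq> (\<psi>(Suc k := c)) v"
    using \<psi> c lollipop_adj_last[OF \<open>2 \<le> k\<close>] lollipop_adj_sym[of u v]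
    unfolding is_L_colouring_def by (cases "u = Suc k"; cases "v = Suc k") (auto simp: le_Suc_eq)
qed

lemma exists_lollipop_colouring:
  "2 \<le> k \<Longrightarrow> \<forall>x\<le>k. finite (L x) \<and> 3 \<le> card (L x) \<Longrightarrow> c \<in> L k \<Longrightarrow>
    \<exists>\<psi>. is_L_colouring {0..k} lollipop_adj L \<psi> \<and> \<psi> k = c"
proof (induction k arbitrary: c rule: dec_induct)
  case base
  obtain a where a: "a \<in> L 0" "a \<noteq> c"
    using ex_avoiding_two[of "L 0" c c] base.prems(1) by auto
  obtain b where b: "b \<in> L 1" "b \<noteq> c" "b \<noteq> a"
    using ex_avoiding_two[of "L 1" c a] base.prems(1) by auto
  let ?\<psi> = "\<lambda>i::nat. if i = 0 then a else if i = 1 then b else c"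
  have "is_L_colouring {0..2} lollipop_adj L ?\<psi>"
    unfolding is_L_colouring_def using a b base.prems(2)
    by (auto simp: lollipop_adj_triangle numeral_2_eq_2 le_Suc_eq)
  then show ?case by force
next
  case (step k)
  obtain d where d: "d \<in> L k" "d \<noteq> c"
    using ex_avoiding_two[of "L k" c c] step.prems(1) by auto
  then obtain \<psi> where "is_L_colouring {0..k} lollipop_adj L \<psi>" "\<psi> k = d"
    using step.IH step.prems(1) by auto
  then have "is_L_colouring {0..Suc k} lollipop_adj L (\<psi>(Suc k := c))"
    using step.hyps(1) step.prems(2) d(2) by (intro is_L_colouring_lollipop_Suc) auto
  then show ?case by force
qed

lemma degree_lollipop_ge_2:
  assumes "2 \<le> N" "x \<le> N" "x \<le> 2 \<or> x < N"
  shows "2 \<le> degree {0..N} lollipop_adj x"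
proof -
  obtain a b where "a \<noteq> b" "{a, b} \<subseteq> {u \<in> {0..N}. lollipop_adj x u}"
  proof (cases "x \<le> 2")
    case True
    then consider "x = 0" | "x = 1" | "x = 2" by linarith
    then show ?thesis
      using that[of 1 2] that[of 0 2] that[of 0 1] assms(1) by cases (auto simp: lollipop_adj_def)
  next
    case False
    then show ?thesis
      using assms by (intro that[of "x - 1" "Suc x"]) (auto simp: lollipop_adj_def)
  qed
  then show ?thesis
    using card_le_degree[of "{0..N}" "{a, b}" lollipop_adj x] by simp
qed

lemma degree_lollipop_2: "3 \<le> N \<Longrightarrow> 3 \<le> degree {0..N} lollipop_adj 2"
  using card_le_degree[of "{0..N}" "{0, 1, 3}" lollipop_adj 2] by (simp add: lollipop_adj_def)

lemma common_unfrozen_edge: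
  assumes "finite (L 0)"
    and r: "Ex (unfrozen_colouring {0..0} lollipop_adj (residual_lists lollipop_adj (Suc 0) L r))"
    and r': "Ex (unfrozen_colouring {0..0} lollipop_adj (residual_lists lollipop_adj (Suc 0) L r'))"
  shows "\<exists>\<psi>. unfrozen_colouring {0..0} lollipop_adj (residual_lists lollipop_adj (Suc 0) L r) \<psi> \<and>
    unfrozen_colouring {0..0} lollipop_adj (residual_lists lollipop_adj (Suc 0) L r') \<psi>"
proof -
  have res: "residual_lists lollipop_adj (Suc 0) L q 0 = L 0 - {q}" for q
    by (simp add: residual_lists_lollipop)
  have clique: "\<forall>u\<in>{0..0}. \<forall>v\<in>{0..0}. lollipop_adj u v \<longleftrightarrow> u \<noteq> v" by simp
  have fin: "\<forall>v\<in>{0..0}. finite (residual_lists lollipop_adj (Suc 0) L q v)" for q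
    using assms(1) res by simp
  obtain \<psi> where "is_L_colouring {0..0} lollipop_adj (residual_lists lollipop_adj (Suc 0) L r) \<psi>"
    and "unfrozen {0..0} lollipop_adj (residual_lists lollipop_adj (Suc 0) L r) \<psi>"
    using r unfolding unfrozen_colouring_def by blast
  then have "card {r'} < card (L 0 - {r})"
    using unfrozen_clique_iff_card[OF _ fin clique] res by simp
  then obtain x where x: "x \<in> L 0 - {r}" "x \<noteq> r'"
    using ex_not_in_card_less[of "{r'}"] by auto
  have "is_L_colouring {0..0} lollipop_adj (residual_lists lollipop_adj (Suc 0) L q) (\<lambda>_. x)"
    if "q \<in> {r, r'}" for q
    using that x res unfolding is_L_colouring_def by auto
  then show ?thesis
    using unfrozen_colouring_clique[OF _ fin clique] r r' by blast
qed

lemma ex_distinct_avoiding_pair: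
  assumes A: "finite A" "3 \<le> card A" and B: "finite B" "3 \<le> card B"
    and AB: "2 < card (A \<union> B - {r})"
  shows "\<exists>p\<in>A - {r, r'}. \<exists>q\<in>B - {r, r'}. p \<noteq> q"
proof (rule ccontr)
  assume none: "\<not> ?thesis"
  obtain a where a: "a \<in> A" "a \<noteq> r" "a \<noteq> r'" using ex_avoiding_two[OF A] by blast
  obtain b where b: "b \<in> B" "b \<noteq> r" "b \<noteq> r'" using ex_avoiding_two[OF B] by blast
  have eq: "p = q" if "p \<in> A - {r, r'}" "q \<in> B - {r, r'}" for p q
    using none that by blast
  have "x \<in> {r', a}" if "x \<in> A \<union> B - {r}" for x
    using that eq[of x b] eq[of a b] eq[of a x] a b by auto
  then have "A \<union> B - {r} \<subseteq> {r', a}" ..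
  then have "card (A \<union> B - {r}) \<le> card {r', a}"
    by (rule card_mono[rotated]) simp
  also have "\<dots> \<le> 2"
    by (simp add: card_insert_le_m1)
  finally show False
    using AB by simp
qed

lemma common_unfrozen_triangle:
  assumes L0: "finite (L 0)" "3 \<le> card (L 0)" and L1: "finite (L 1)" "3 \<le> card (L 1)"
    and r: "Ex (unfrozen_colouring {0..1} lollipop_adj (residual_lists lollipop_adj (Suc 1) L r))"
    and r': "Ex (unfrozen_colouring {0..1} lollipop_adj (residual_lists lollipop_adj (Suc 1) L r'))"
  shows "\<exists>\<psi>. unfrozen_colouring {0..1} lollipop_adj (residual_lists lollipop_adj (Suc 1) L r) \<psi> \<and>
    unfrozen_colouring {0..1} lollipop_adj (residual_lists lollipop_adj (Suc 1) L r') \<psi>"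
proof -
  have W: "{0..1::nat} = {0, 1}" by auto
  have res: "residual_lists lollipop_adj (Suc 1) L q x = L x - {q}" if "x \<le> 1" for q x
    using that by (simp add: residual_lists_lollipop)
  have clique: "\<forall>u\<in>{0..1}. \<forall>v\<in>{0..1}. lollipop_adj u v \<longleftrightarrow> u \<noteq> v"
    by (simp add: lollipop_adj_triangle)
  have fin: "\<forall>v\<in>{0..1}. finite (residual_lists lollipop_adj (Suc 1) L q v)" for q
    using L0 L1 res unfolding W by simp
  obtain \<psi> where "is_L_colouring {0..1} lollipop_adj (residual_lists lollipop_adj (Suc 1) L r) \<psi>"
    and "unfrozen {0..1} lollipop_adj (residual_lists lollipop_adj (Suc 1) L r) \<psi>"
    using r unfolding unfrozen_colouring_def by blast
  then have card_r: "2 < card (L 0 \<union> L 1 - {r})"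
    using unfrozen_clique_iff_card[OF _ fin clique] res unfolding W by (simp add: Un_Diff)
  then obtain p q where pq: "p \<in> L 0 - {r, r'}" "q \<in> L 1 - {r, r'}" "p \<noteq> q"
    using ex_distinct_avoiding_pair[OF L0 L1 card_r, of r'] by blast
  let ?\<psi> = "\<lambda>i::nat. if i = 0 then p else q"
  have "is_L_colouring {0..1} lollipop_adj (residual_lists lollipop_adj (Suc 1) L s) ?\<psi>"
    if "s \<in> {r, r'}" for s
    using that pq res unfolding is_L_colouring_def W by auto
  then show ?thesis
    using unfrozen_colouring_clique[OF _ fin clique] r r' by blast
qed

lemma common_unfrozen_paw:
  assumes L0: "finite (L 0)" "3 \<le> card (L 0)" and L1: "finite (L 1)" "3 \<le> card (L 1)"
    and L2: "finite (L 2)" "4 \<le> card (L 2)"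
    and r: "Ex (unfrozen_colouring {0..2} lollipop_adj (residual_lists lollipop_adj (Suc 2) L r))"
    and r': "Ex (unfrozen_colouring {0..2} lollipop_adj (residual_lists lollipop_adj (Suc 2) L r'))"
  shows "\<exists>\<psi>. unfrozen_colouring {0..2} lollipop_adj (residual_lists lollipop_adj (Suc 2) L r) \<psi> \<and>
    unfrozen_colouring {0..2} lollipop_adj (residual_lists lollipop_adj (Suc 2) L r') \<psi>"
proof -
  have W: "{0..2::nat} = {0, 1, 2}" by auto
  have res: "residual_lists lollipop_adj (Suc 2) L q x = (if x = 2 then L x - {q} else L x)"
    if "x \<le> 2" for q x
    using that residual_lists_lollipop[of x 2 L q] by simp
  have clique: "\<forall>u\<in>{0..2}. \<forall>v\<in>{0..2}. lollipop_adj u v \<longleftrightarrow> u \<noteq> v"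
    by (simp add: lollipop_adj_triangle)
  have fin: "\<forall>v\<in>{0..2}. finite (residual_lists lollipop_adj (Suc 2) L q v)" for q
    using L0 L1 L2 res unfolding W by simp
  obtain s where s: "s \<in> L 2" "s \<noteq> r" "s \<noteq> r'"
    using ex_avoiding_two[of "L 2"] L2 by fastforce
  obtain p where p: "p \<in> L 0" "p \<noteq> s"
    using ex_avoiding_two[OF L0] by blast
  obtain q where q: "q \<in> L 1" "q \<noteq> s" "q \<noteq> p"
    using ex_avoiding_two[OF L1] by blast
  let ?\<psi> = "\<lambda>i::nat. if i = 0 then p else if i = 1 then q else s"
  have "is_L_colouring {0..2} lollipop_adj (residual_lists lollipop_adj (Suc 2) L t) ?\<psi>"
    if "t \<in> {r, r'}" for t
    using that p q s res unfolding is_L_colouring_def W by (auto simp: lollipop_adj_triangle)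
  then show ?thesis
    using unfrozen_colouring_clique[OF _ fin clique] r r' by blast
qed

lemma is_L_colouring_residual_lollipop_iff:
  "2 \<le> n \<Longrightarrow> is_L_colouring {0..n} lollipop_adj (residual_lists lollipop_adj (Suc n) L r) \<psi> \<longleftrightarrow>
    is_L_colouring {0..n} lollipop_adj L \<psi> \<and> \<psi> n \<noteq> r"
  unfolding is_L_colouring_def using residual_lists_lollipop[of _ n L r] by auto

lemma exists_colouring_unfrozen_penultimate:
  assumes j: "2 \<le> j" and lists: "\<forall>x\<le>Suc (Suc j). finite (L x) \<and> 3 \<le> card (L x)"
    and r: "r \<in> L (Suc j)" "r' \<in> L (Suc j)" "r \<noteq> r'" and c: "c \<in> L (Suc (Suc j))" "c \<noteq> r" "c \<noteq> r'"
  obtains \<psi> where "is_L_colouring {0..Suc (Suc j)} lollipop_adj L \<psi>" "\<psi> (Suc (Suc j)) = c"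
    "\<And>q. unfrozen {0..Suc (Suc j)} lollipop_adj
        (residual_lists lollipop_adj (Suc (Suc (Suc j))) L q) \<psi>"
proof -
  have lists_j: "\<forall>x\<le>j. finite (L x) \<and> 3 \<le> card (L x)"
    using lists by simp
  then obtain f where f: "f \<in> L j" "f \<noteq> r" "f \<noteq> r'"
    using ex_avoiding_two[of "L j" r r'] by blast
  then obtain \<psi> where \<psi>: "is_L_colouring {0..j} lollipop_adj L \<psi>" "\<psi> j = f"
    using exists_lollipop_colouring[OF j lists_j] by blast
  let ?\<psi> = "\<psi>(Suc j := r, Suc (Suc j) := c)"
  have "is_L_colouring {0..Suc j} lollipop_adj L (\<psi>(Suc j := r))"
    using \<psi>(1) j r(1) by (rule is_L_colouring_lollipop_Suc) (use \<psi>(2) f in simp)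
  then have "is_L_colouring {0..Suc (Suc j)} lollipop_adj L ?\<psi>"
    by (rule is_L_colouring_lollipop_Suc) (use j c in simp_all)
  moreover have "unfrozen {0..Suc (Suc j)} lollipop_adj
      (residual_lists lollipop_adj (Suc (Suc (Suc j))) L q) ?\<psi>"
    for q
  proof (rule unfrozenI[of "Suc j" _ r'])
    have "u = j \<or> u = Suc (Suc j)" if "lollipop_adj (Suc j) u" for u
      using that lollipop_adj_path[of "Suc j" u] j by simp
    then show "\<forall>u\<in>{0..Suc (Suc j)}. lollipop_adj (Suc j) u \<longrightarrow> ?\<psi> u \<noteq> r'"
      using \<psi>(2) f c by auto
    show "r' \<in> residual_lists lollipop_adj (Suc (Suc (Suc j))) L q (Suc j)"
      using residual_lists_lollipop[of "Suc j" "Suc (Suc j)" L q] r(2) by simp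
  qed (use r(3) in simp_all)
  ultimately show ?thesis
    using that by simp
qed

lemma exists_colouring_unfrozen_end:
  assumes k: "2 \<le> k" and lists: "\<forall>x\<le>k. finite (L x) \<and> 3 \<le> card (L x)"
    and e: "e \<in> L k" "e \<noteq> c" and c: "c \<in> L (Suc k)"
    and free: "\<And>q. q \<in> Q \<Longrightarrow> \<exists>d\<in>L (Suc k). d \<notin> {q, e, c}"
  obtains \<psi> where "is_L_colouring {0..Suc k} lollipop_adj L \<psi>" "\<psi> (Suc k) = c"
    "\<And>q. q \<in> Q \<Longrightarrow> unfrozen {0..Suc k} lollipop_adj
        (residual_lists lollipop_adj (Suc (Suc k)) L q) \<psi>"
proof -
  obtain \<psi> where \<psi>: "is_L_colouring {0..k} lollipop_adj L \<psi>" "\<psi> k = e"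
    using exists_lollipop_colouring[OF k lists e(1)] by blast
  let ?\<psi> = "\<psi>(Suc k := c)"
  have "is_L_colouring {0..Suc k} lollipop_adj L ?\<psi>"
    using \<psi>(1) k c by (rule is_L_colouring_lollipop_Suc) (use \<psi>(2) e(2) in simp)
  moreover have "unfrozen {0..Suc k} lollipop_adj
      (residual_lists lollipop_adj (Suc (Suc k)) L q) ?\<psi>"
    if q: "q \<in> Q" for q
  proof -
    obtain d where d: "d \<in> L (Suc k)" "d \<notin> {q, e, c}"
      using free[OF q] by blast
    show ?thesis
    proof (rule unfrozenI[of "Suc k" _ d])
      show "d \<in> residual_lists lollipop_adj (Suc (Suc k)) L q (Suc k)"
        using residual_lists_lollipop[of "Suc k" "Suc k" L q] d by simp
      show "\<forall>u\<in>{0..Suc k}. lollipop_adj (Suc k) u \<longrightarrow> ?\<psi> u \<noteq> d"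
      proof (intro ballI impI)
        fix u assume "u \<in> {0..Suc k}" "lollipop_adj (Suc k) u"
        then have "u = k"
          using lollipop_adj_last[OF k, of u] by simp
        then show "?\<psi> u \<noteq> d"
          using d(2) \<psi>(2) by auto
      qed
    qed (use d(2) in simp_all)
  qed
  ultimately show ?thesis
    using that by simp
qed

lemma subset_three_eq: "3 \<le> card A \<Longrightarrow> A \<subseteq> {a, b, c} \<Longrightarrow> A = {a, b, c}"
  using card_seteq[of "{a, b, c}" A] card_insert_le_m1[of 3 "{b, c}" a]
    card_insert_le_m1[of 2 "{c}" b]
  by simp

lemma exists_colouring_residually_unfrozen_path:
  assumes k: "2 \<le> k" and lists: "\<forall>x\<le>Suc k. finite (L x) \<and> 3 \<le> card (L x)"
    and L2: "4 \<le> card (L 2)" and "r \<noteq> r'" and c: "c \<in> L (Suc k)" "c \<notin> {r, r'}"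
  obtains \<psi> where "is_L_colouring {0..Suc k} lollipop_adj L \<psi>" "\<psi> (Suc k) = c"
    "\<And>q. q \<in> {r, r'} \<Longrightarrow> unfrozen {0..Suc k} lollipop_adj
        (residual_lists lollipop_adj (Suc (Suc k)) L q) \<psi>"
proof -
  have lists_k: "\<forall>x\<le>k. finite (L x) \<and> 3 \<le> card (L x)" and Lk: "finite (L k)" "3 \<le> card (L k)"
    using lists by simp_all
  (* Either a fourth colour d of L (Suc k) stays free there, or
     L (Suc k) = {r, r', c} and a colour of L k outside it leaves r' resp. r free at Suc k, or
     also L k = {r, r', c}, and colouring k with r leaves r' free at k. *)
  show ?thesis
  proof (cases "L (Suc k) \<subseteq> {r, r', c}")
    case False
    then obtain d where d: "d \<in> L (Suc k)" "d \<notin> {r, r', c}" by blast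
    obtain e where e: "e \<in> L k" "e \<noteq> c" "e \<noteq> d"
      using ex_avoiding_two[OF Lk] by blast
    have "\<exists>d\<in>L (Suc k). d \<notin> {q, e, c}" if "q \<in> {r, r'}" for q
      using d e(3) that by blast
    with exists_colouring_unfrozen_end[OF k lists_k e(1,2) c(1)] that show ?thesis by blast
  next
    case True
    then have end_full: "L (Suc k) = {r, r', c}"
      by (intro subset_three_eq) (use lists in simp_all)
    show ?thesis
    proof (cases "L k \<subseteq> {r, r', c}")
      case False
      then obtain e where e: "e \<in> L k" "e \<notin> {r, r', c}" by blast
      have "\<exists>d\<in>L (Suc k). d \<notin> {q, e, c}" if "q \<in> {r, r'}" for q
        using that end_full e c(2) \<open>r \<noteq> r'\<close> by auto
      moreover have "e \<noteq> c" using e by blast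
      ultimately show ?thesis
        using exists_colouring_unfrozen_end[OF k lists_k e(1) _ c(1)] that by blast
    next
      case True
      then have pred_full: "L k = {r, r', c}"
        by (rule subset_three_eq[OF Lk(2)])
      have "k \<noteq> 2"
        using pred_full L2 card_insert_le_m1[of 3 "{r', c}" r]
          card_insert_le_m1[of 2 "{c}" r'] by auto
      then obtain j where j: "k = Suc j" "2 \<le> j"
        using k by (cases k) auto
      have "r \<in> L (Suc j)" "r' \<in> L (Suc j)"
        using pred_full j(1) by auto
      then show ?thesis
        using exists_colouring_unfrozen_penultimate[of j L r r' c] j lists c \<open>r \<noteq> r'\<close> that by auto
    qed
  qed
qed

lemma common_unfrozen_path:
  assumes k: "2 \<le> k" and lists: "\<forall>x\<le>Suc k. finite (L x) \<and> 3 \<le> card (L x)"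
    and L2: "4 \<le> card (L 2)" and "r \<noteq> r'"
  shows "\<exists>\<psi>.
    unfrozen_colouring {0..Suc k} lollipop_adj (residual_lists lollipop_adj (Suc (Suc k)) L r) \<psi> \<and>
    unfrozen_colouring {0..Suc k} lollipop_adj (residual_lists lollipop_adj (Suc (Suc k)) L r') \<psi>"
proof -
  obtain c where c: "c \<in> L (Suc k)" "c \<notin> {r, r'}"
    using ex_avoiding_two[of "L (Suc k)" r r'] lists by auto
  then obtain \<psi> where \<psi>: "is_L_colouring {0..Suc k} lollipop_adj L \<psi>" "\<psi> (Suc k) = c"
    "\<And>q. q \<in> {r, r'} \<Longrightarrow> unfrozen {0..Suc k} lollipop_adj
        (residual_lists lollipop_adj (Suc (Suc k)) L q) \<psi>"
    using exists_colouring_residually_unfrozen_path[OF k lists L2 \<open>r \<noteq> r'\<close>] by blast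
  show ?thesis
    unfolding unfrozen_colouring_def using \<psi> c k
    by (intro exI[of _ \<psi>]) (simp add: is_L_colouring_residual_lollipop_iff)
qed

lemma card_lists_lollipop_ge_3:
  assumes "deg_plus_one_lists {0..Suc n} lollipop_adj L" "1 \<le> n" "x \<le> n"
  shows "finite (L x) \<and> 3 \<le> card (L x)"
proof -
  have "2 \<le> degree {0..Suc n} lollipop_adj x"
    using degree_lollipop_ge_2[of "Suc n" x] assms(2,3) by simp
  moreover have "finite (L x)" "degree {0..Suc n} lollipop_adj x + 1 \<le> card (L x)"
    using assms unfolding deg_plus_one_lists_def by auto
  ultimately show ?thesis by simp
qed

lemma card_lists_lollipop_2:
  assumes "deg_plus_one_lists {0..Suc n} lollipop_adj L" "2 \<le> n"
  shows "4 \<le> card (L 2)"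
proof -
  have "3 \<le> degree {0..Suc n} lollipop_adj 2"
    using degree_lollipop_2[of "Suc n"] assms(2) by simp
  moreover have "degree {0..Suc n} lollipop_adj 2 + 1 \<le> card (L 2)"
    using assms unfolding deg_plus_one_lists_def by auto
  ultimately show ?thesis by simp
qed

lemma common_unfrozen_lollipop:
  assumes lists: "deg_plus_one_lists {0..Suc n} lollipop_adj L" and "r \<noteq> r'"
    and r: "Ex (unfrozen_colouring {0..n} lollipop_adj (residual_lists lollipop_adj (Suc n) L r))"
    and r': "Ex (unfrozen_colouring {0..n} lollipop_adj (residual_lists lollipop_adj (Suc n) L r'))"
  shows "\<exists>\<psi>. unfrozen_colouring {0..n} lollipop_adj (residual_lists lollipop_adj (Suc n) L r) \<psi> \<and>
    unfrozen_colouring {0..n} lollipop_adj (residual_lists lollipop_adj (Suc n) L r') \<psi>"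
proof -
  have three: "finite (L x) \<and> 3 \<le> card (L x)" if "1 \<le> n" "x \<le> n" for x
    using card_lists_lollipop_ge_3[OF lists] that by simp
  have four: "4 \<le> card (L 2)" if "2 \<le> n"
    using card_lists_lollipop_2[OF lists] that by simp
  consider "n = 0" | "n = 1" | "n = 2" | k where "n = Suc k" "2 \<le> k"
  proof (cases "n \<le> 2")
    case True
    then have "n = 0 \<or> n = 1 \<or> n = 2" by linarith
    with that(1-3) show ?thesis by blast
  next
    case False
    with that(4)[of "n - 1"] show ?thesis by simp
  qed
  then show ?thesis
  proof cases
    case 1
    then show ?thesis
      using common_unfrozen_edge[of L r r'] lists r r' unfolding deg_plus_one_lists_def by simp
  next
    case 2
    then show ?thesis
      using common_unfrozen_triangle[of L r r'] three r r' by simp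
  next
    case 3
    then show ?thesis
      using common_unfrozen_paw[of L r r'] three four r r' by simp
  next
    case 4
    then show ?thesis
      using common_unfrozen_path[of k L r r'] three four \<open>r \<noteq> r'\<close> by simp
  qed
qed

theorem unfrozen_connected_lollipop:
  fixes L :: "nat \<Rightarrow> 'c set"
  shows "deg_plus_one_lists {0..n} lollipop_adj L \<Longrightarrow> unfrozen_connected {0..n} lollipop_adj L"
proof (induction n arbitrary: L)
  case 0
  have "recolour_step {0} lollipop_adj L \<alpha> \<beta>"
    if "is_L_colouring {0} lollipop_adj L \<alpha>" "is_L_colouring {0} lollipop_adj L \<beta>" for \<alpha> \<beta>
    using that unfolding recolour_step_def by auto
  then show ?case
    unfolding unfrozen_connected_def unfrozen_colouring_def
    by (auto intro: recolour_step_imp_reconf_equiv)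
next
  case (Suc n)
  have V: "{0..Suc n} - {Suc n} = {0..n}" by auto
  show ?case
  proof (rule unfrozen_connected_delete_vertex[of "{0..Suc n}" "Suc n", unfolded V])
    show "\<forall>x\<in>{0..Suc n}. \<forall>y\<in>{0..Suc n}. lollipop_adj x y = lollipop_adj y x"
      using lollipop_adj_sym by blast
    show "\<exists>x\<in>{0..Suc n}. lollipop_adj (Suc n) x"
      using lollipop_adj_Suc[of n] by (intro bexI[of _ n]) simp_all
    show "\<forall>L' :: nat \<Rightarrow> 'c set.
        deg_plus_one_lists {0..n} lollipop_adj L' \<longrightarrow> unfrozen_connected {0..n} lollipop_adj L'"
      using Suc.IH by blast
  qed (use Suc.prems common_unfrozen_lollipop[OF Suc.prems] in simp_all)
qed

lemma colouring_notions_cong: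
  assumes "\<forall>x\<in>V. \<forall>y\<in>V. E x y \<longleftrightarrow> E' x y"
  shows "v \<in> V \<Longrightarrow> degree V E v = degree V E' v"
    and "is_L_colouring V E L \<phi> \<longleftrightarrow> is_L_colouring V E' L \<phi>"
    and "unfrozen V E L \<phi> \<longleftrightarrow> unfrozen V E' L \<phi>"
    and "reconf_equiv V E L \<alpha> \<beta> \<longleftrightarrow> reconf_equiv V E' L \<alpha> \<beta>"
proof -
  show "v \<in> V \<Longrightarrow> degree V E v = degree V E' v"
    unfolding degree_def using assms by (metis (no_types, lifting) Collect_cong)
  show "is_L_colouring V E L \<phi> \<longleftrightarrow> is_L_colouring V E' L \<phi>" for \<phi>
    unfolding is_L_colouring_def using assms by auto
  then have "recolour_step V E L = recolour_step V E' L"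
    unfolding recolour_step_def by (intro ext) auto
  then show "reconf_equiv V E L \<alpha> \<beta> \<longleftrightarrow> reconf_equiv V E' L \<alpha> \<beta>"
    unfolding reconf_equiv_def by simp
  show "unfrozen V E L \<phi> \<longleftrightarrow> unfrozen V E' L \<phi>"
    unfolding unfrozen_def frozen_def using assms by auto
qed

theorem mainTheorem16:
  fixes n :: nat and L :: "nat \<Rightarrow> 'c set" and \<alpha> \<beta> :: "nat \<Rightarrow> 'c"
  assumes "n \<ge> 3"
    and "\<forall>v\<in>paw_vertices n. finite (L v)"
    and "\<forall>v\<in>paw_vertices n. card (L v) \<ge> degree (paw_vertices n) (paw_adj n) v + 1"
    and "is_L_colouring (paw_vertices n) (paw_adj n) L \<alpha>"
    and "is_L_colouring (paw_vertices n) (paw_adj n) L \<beta>"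
    and "unfrozen (paw_vertices n) (paw_adj n) L \<alpha>"
    and "unfrozen (paw_vertices n) (paw_adj n) L \<beta>"
  shows "reconf_equiv (paw_vertices n) (paw_adj n) L \<alpha> \<beta>"
proof -
  have V: "paw_vertices n = {0..n}"
    by (simp add: paw_vertices_def)
  have "\<forall>x\<in>{0..n}. \<forall>y\<in>{0..n}. paw_adj n x y \<longleftrightarrow> lollipop_adj x y"
    by (simp add: paw_adj_iff)
  note cong = colouring_notions_cong[OF this]
  have "deg_plus_one_lists {0..n} lollipop_adj L"
    using assms(2,3) cong(1) unfolding V deg_plus_one_lists_def by auto
  then have "unfrozen_connected {0..n} lollipop_adj L"
    by (rule unfrozen_connected_lollipop)
  then show ?thesis
    using assms(4-7) unfolding V cong(2-4) unfrozen_connected_def unfrozen_colouring_def by blast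
qed

end
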